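(* Let $X$ be a CFG-space over a Boolean ring $B$, $0\in X$, and let $U\subseteq X$ with $0\in U$ be a CFG-space. Then $U^{\perp}=\{x\in X: x\perp y \text{ for all } y\in U\}$ is a CFG-space, and every element of $X$ is a convex combination of elements of $U\cup U^{\perp}$.
   Context: $B$ is a Boolean ring ($a\vee b=a+b+ab$, $a\le b\iff ab=a$; $a_1\oplus\cdots\oplus a_n$ denotes a sum of pairwise disjoint elements). A Boolean metric space over $B$: set $X$ with $d:X\times X\to B$, $d(x,y)=0\iff x=y$, symmetric, $d(x,z)\le d(x,y)\vee d(y,z)$. For $x_1,\dots,x_n\in X$, $a_i\in B$ with $a_1\oplus\cdots\oplus a_n=1$, $x$ is a convex combination of the $x_i$ with coefficients $a_i$ if $a_id(x,x_i)=0$ for all $i$. A CFG-space is a space in which all such combinations exist and every element is a convex combination of elements of some fixed finite subset. In the pointed space $(X,0)$, $|x|=d(0,x)$, and $x\perp y$ (orthogonal) means $d(x,y)=|x|\vee|y|$. *)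

theory Defs
  imports Main
begin

definition boolean_ring_type :: "'b::comm_ring_1 itself \<Rightarrow> bool" where
  "boolean_ring_type _ \<longleftrightarrow> (\<forall>a::'b. a * a = a)"

definition bjoin :: "'b::comm_ring_1 \<Rightarrow> 'b \<Rightarrow> 'b" where
  "bjoin a b = a + b + a * b"

definition ble :: "'b::comm_ring_1 \<Rightarrow> 'b \<Rightarrow> bool" where
  "ble a b \<longleftrightarrow> a * b = a"

definition boolean_metric :: "'a set \<Rightarrow> ('a \<Rightarrow> 'a \<Rightarrow> 'b::comm_ring_1) \<Rightarrow> bool" where
  "boolean_metric X d \<longleftrightarrow>
     (\<forall>x\<in>X. \<forall>y\<in>X. d x y = 0 \<longleftrightarrow> x = y) \<and>
     (\<forall>x\<in>X. \<forall>y\<in>X. d x y = d y x) \<and>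
     (\<forall>x\<in>X. \<forall>y\<in>X. \<forall>z\<in>X. ble (d x z) (bjoin (d x y) (d y z)))"

definition partition_unity :: "nat \<Rightarrow> (nat \<Rightarrow> 'b::comm_ring_1) \<Rightarrow> bool" where
  "partition_unity n a \<longleftrightarrow>
     (\<forall>i<n. \<forall>j<n. i \<noteq> j \<longrightarrow> a i * a j = 0) \<and> (\<Sum>i<n. a i) = 1"

definition convex_comb :: "('a \<Rightarrow> 'a \<Rightarrow> 'b::comm_ring_1) \<Rightarrow> 'a \<Rightarrow> nat \<Rightarrow> (nat \<Rightarrow> 'b) \<Rightarrow> (nat \<Rightarrow> 'a) \<Rightarrow> bool" where
  "convex_comb d x n a p \<longleftrightarrow> partition_unity n a \<and> (\<forall>i<n. a i * d x (p i) = 0)"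

definition cfg_space :: "'a set \<Rightarrow> ('a \<Rightarrow> 'a \<Rightarrow> 'b::comm_ring_1) \<Rightarrow> bool" where
  "cfg_space X d \<longleftrightarrow> boolean_metric X d \<and>
     (\<forall>n a p. partition_unity n a \<and> (\<forall>i<n. p i \<in> X) \<longrightarrow> (\<exists>x\<in>X. convex_comb d x n a p)) \<and>
     (\<exists>F. finite F \<and> F \<subseteq> X \<and>
        (\<forall>x\<in>X. \<exists>n a p. (\<forall>i<n. p i \<in> F) \<and> convex_comb d x n a p))"

text \<open>Orthogonality in the pointed space (X, o): |x| = d z x.\<close>
definition orth :: "('a \<Rightarrow> 'a \<Rightarrow> 'b::comm_ring_1) \<Rightarrow> 'a \<Rightarrow> 'a \<Rightarrow> 'a \<Rightarrow> bool" where
  "orth d z x y \<longleftrightarrow> d x y = bjoin (d z x) (d z y)"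

definition orth_compl :: "'a set \<Rightarrow> ('a \<Rightarrow> 'a \<Rightarrow> 'b::comm_ring_1) \<Rightarrow> 'a \<Rightarrow> 'a set \<Rightarrow> 'a set" where
  "orth_compl X d z U = {x\<in>X. \<forall>y\<in>U. orth d z x y}"

end

theory Submission
  imports Defs
begin

text \<open>
  Let FU be a finite generating set of U, listed as us, and for x \<in> X let
  c(x) = \<Or>{1 + d(x,u) | u \<in> FU}: the part of B on which x coincides with a generator of U.
  Since X is a CFG-space we may glue the base point z (on c(x)) with x (off c(x)) to a point
  g(x) \<in> X. Then
  (A) g(x) \<in> U^\<bottom>: on c(x) it is the base point, and off c(x) it is at distance 1 from
      every generator of U, hence from every element of U;
  (B) if w \<in> U^\<bottom> agrees with h on a, then w agrees with g(h) on a, so U^\<bottom> is generated by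
      the finitely many points g(h), h ranging over a generating set of X;
  (C) U^\<bottom> is closed under convex combinations, since orthogonality is a local property;
  (D) x is a convex combination of generators of U (on c(x)) and of g(x) (off c(x)).
\<close>

locale boolean_metric_space =
  fixes X :: "'a set" and d :: "'a \<Rightarrow> 'a \<Rightarrow> 'b::comm_ring_1"
  assumes idem: "\<And>a::'b. a * a = a" and metric: "boolean_metric X d"
begin

lemma char_two: "(a::'b) + a = 0"
proof -
  have "a + a = (a + a) * (a + a)" by (rule idem[symmetric])
  also have "\<dots> = a * a + a * a + (a * a + a * a)" by (simp only: distrib_left distrib_right)
  also have "\<dots> = (a + a) + (a + a)" by (simp only: idem)
  finally have "(a + a) + (a + a) = (a + a) + 0" by simp
  then show ?thesis by (simp only: add_left_cancel)
qed

lemma idem_left: "(a::'b) * (a * b) = a * b"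
  by (simp add: mult.assoc[symmetric] idem)

lemma cancel_left: "(a::'b) + (a + b) = b"
  by (simp add: add.assoc[symmetric] char_two)

lemma minus_self: "- (a::'b) = a"
  using char_two[of a] by (metis add_eq_0_iff)

lemmas bool_simps = algebra_simps idem idem_left char_two cancel_left minus_self

lemma complement_below_swap:
  assumes "(1 + a) * b = 1 + (a::'b)"
  shows "(1 + b) * a = 1 + b"
proof -
  have "b + a * b = 1 + a" using assms by (simp add: distrib_right)
  then have "b + (b + a * b) = b + (1 + a)" by simp
  then have ab: "a * b = b + (1 + a)" by (simp only: cancel_left)
  have "(1 + b) * a = a + a * b" by (simp add: algebra_simps)
  also have "\<dots> = a + (a + (1 + b))" unfolding ab by (simp only: ac_simps)
  also have "\<dots> = 1 + b" by (rule cancel_left)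
  finally show ?thesis .
qed

lemma partition_local_eq:
  assumes "partition_unity n f" and "\<forall>i<n. f i * A = f i * E"
  shows "A = E"
proof -
  have s: "(\<Sum>i<n. f i) = 1" using assms(1) unfolding partition_unity_def by blast
  have "A = (\<Sum>i<n. f i * A)" using s by (simp add: sum_distrib_right[symmetric])
  also have "\<dots> = (\<Sum>i<n. f i * E)" using assms(2) by simp
  also have "\<dots> = E" using s by (simp add: sum_distrib_right[symmetric])
  finally show ?thesis .
qed

lemma complement_local_eq:
  assumes "C * A = C * E" and "(1 + C) * A = (1 + C) * (E::'b)"
  shows "A = E"
proof -
  have "A = C * A + (1 + C) * A" by (simp add: bool_simps)
  also have "\<dots> = C * E + (1 + C) * E" using assms by simp
  also have "\<dots> = E" by (simp add: bool_simps)
  finally show ?thesis .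
qed

lemma bjoin_local: "a * A = a * A' \<Longrightarrow> a * bjoin A C = a * bjoin A' C"
  unfolding bjoin_def by (simp add: distrib_left mult.assoc[symmetric])

lemma dist_sym: "x \<in> X \<Longrightarrow> y \<in> X \<Longrightarrow> d x y = d y x"
  using metric unfolding boolean_metric_def by blast

lemma dist_triangle:
  "x \<in> X \<Longrightarrow> y \<in> X \<Longrightarrow> w \<in> X \<Longrightarrow> d x w * bjoin (d x y) (d y w) = d x w"
  using metric unfolding boolean_metric_def ble_def by blast

lemma dist_local_subst:
  assumes "x \<in> X" "p \<in> X" "y \<in> X" and xp: "a * d x p = 0"
  shows "a * d x y = a * d p y"
proof -
  have t1: "d x y * (d x p + d p y + d x p * d p y) = d x y"
    using dist_triangle[of x p y] assms unfolding bjoin_def by blast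
  have t2: "d p y * (d x p + d x y + d x p * d x y) = d p y"
    using dist_triangle[of p x y] dist_sym[of p x] assms unfolding bjoin_def by simp
  have "a * d x y = a * (d x y * (d x p + d p y + d x p * d p y))" using t1 by simp
  also have "\<dots> = d x y * (a * d x p) + a * d x y * d p y + d x y * d p y * (a * d x p)"
    by (simp add: algebra_simps)
  finally have 1: "a * d x y = a * d x y * d p y" using xp by simp
  have "a * d p y = a * (d p y * (d x p + d x y + d x p * d x y))" using t2 by simp
  also have "\<dots> = d p y * (a * d x p) + a * d x y * d p y + d x y * d p y * (a * d x p)"
    by (simp add: algebra_simps)
  finally show ?thesis using 1 xp by simp
qed

lemma glue_exists:
  assumes comb: "\<forall>n a p. partition_unity n a \<and> (\<forall>i<n. p i \<in> X) \<longrightarrow> (\<exists>x\<in>X. convex_comb d x n a p)"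
    and "p \<in> X" "q \<in> X"
  shows "\<exists>w\<in>X. c * d w p = 0 \<and> (1 + c) * d w q = 0"
proof -
  let ?a = "\<lambda>i::nat. if i = 0 then c else 1 + c"
  let ?p = "\<lambda>i::nat. if i = 0 then p else q"
  have pu: "partition_unity 2 ?a"
    unfolding partition_unity_def
  proof (intro conjI allI impI)
    fix i j :: nat assume "i < 2" "j < 2" "i \<noteq> j"
    moreover have "c * (1 + c) = 0" "(1 + c) * c = 0" by (simp_all add: bool_simps)
    ultimately show "?a i * ?a j = 0" by (auto simp: numeral_2_eq_2 less_Suc_eq)
  next
    show "(\<Sum>i<2. ?a i) = 1" by (simp add: numeral_2_eq_2 bool_simps)
  qed
  have "\<forall>i<2. ?p i \<in> X" using assms by auto
  from comb[rule_format, OF conjI[OF pu this]] obtain w where w: "w \<in> X" "convex_comb d w 2 ?a ?p"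
    by blast
  then have cw: "\<forall>i<2. ?a i * d w (?p i) = 0" unfolding convex_comb_def by blast
  have "c * d w p = 0" using cw[rule_format, of 0] by simp
  moreover have "(1 + c) * d w q = 0" using cw[rule_format, of 1] by simp
  ultimately show ?thesis using w by blast
qed

end

definition local_comb ::
  "('a \<Rightarrow> 'a \<Rightarrow> 'b::comm_ring_1) \<Rightarrow> 'a \<Rightarrow> 'b \<Rightarrow> nat \<Rightarrow> (nat \<Rightarrow> 'b) \<Rightarrow> (nat \<Rightarrow> 'a) \<Rightarrow> bool" where
  "local_comb d x r n a p \<longleftrightarrow>
     (\<forall>i<n. \<forall>j<n. i \<noteq> j \<longrightarrow> a i * a j = 0) \<and> (\<Sum>i<n. a i) = r \<and> (\<forall>i<n. a i * d x (p i) = 0)"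

lemma convex_comb_iff_local_comb: "convex_comb d x n a p \<longleftrightarrow> local_comb d x 1 n a p"
  unfolding convex_comb_def partition_unity_def local_comb_def by blast

definition coincidence :: "('a \<Rightarrow> 'a \<Rightarrow> 'b::comm_ring_1) \<Rightarrow> 'a list \<Rightarrow> 'a \<Rightarrow> 'b" where
  "coincidence d us x = foldr (\<lambda>u acc. bjoin (1 + d x u) acc) us 0"

context boolean_metric_space
begin

lemma local_comb_below:
  assumes L: "local_comb d x r n a p" and i: "i < n"
  shows "a i * r = a i"
proof -
  have disj: "\<forall>j<n. j \<noteq> i \<longrightarrow> a i * a j = 0" and sum: "(\<Sum>j<n. a j) = r"
    using L i unfolding local_comb_def by auto
  have "a i * r = (\<Sum>j<n. a i * a j)" unfolding sum[symmetric] by (rule sum_distrib_left)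
  also have "\<dots> = a i * a i + (\<Sum>j\<in>{..<n} - {i}. a i * a j)"
    using i by (simp add: sum.remove)
  also have "(\<Sum>j\<in>{..<n} - {i}. a i * a j) = 0" using disj by (intro sum.neutral) auto
  finally show ?thesis by (simp add: idem)
qed

lemma local_comb_cons:
  assumes L: "local_comb d x r n a p" and er: "e * r = 0" and eq: "e * d x q = 0"
  shows "local_comb d x (e + r) (Suc n) (case_nat e a) (case_nat q p)"
proof -
  have D: "\<forall>i<n. \<forall>j<n. i \<noteq> j \<longrightarrow> a i * a j = 0" and S: "(\<Sum>i<n. a i) = r"
    and Z: "\<forall>i<n. a i * d x (p i) = 0"
    using L unfolding local_comb_def by auto
  have ea: "e * a j = 0" "a j * e = 0" if "j < n" for j
  proof -
    have "e * a j = (e * r) * a j"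
      using local_comb_below[OF L that] by (metis mult.commute mult.left_commute)
    then show "e * a j = 0" "a j * e = 0" using er by (simp_all add: mult.commute)
  qed
  show ?thesis unfolding local_comb_def
  proof (intro conjI allI impI)
    fix i j assume "i < Suc n" "j < Suc n" "i \<noteq> j"
    then show "case_nat e a i * case_nat e a j = 0"
      using D ea by (cases i; cases j) auto
  next
    show "(\<Sum>i<Suc n. case_nat e a i) = e + r"
      using S by (simp del: sum.lessThan_Suc add: sum.lessThan_Suc_shift)
  next
    fix i assume "i < Suc n"
    then show "case_nat e a i * d x (case_nat q p i) = 0" using Z eq by (cases i) auto
  qed
qed

lemma coincidence_local_comb:
  "\<exists>n a p. (\<forall>i<n. p i \<in> set us) \<and> local_comb d x (coincidence d us x) n a p"
proof (induction us)
  case Nil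
  have "local_comb d x (coincidence d [] x) 0 (\<lambda>_. 0) (\<lambda>_. x)"
    unfolding local_comb_def coincidence_def by simp
  then show ?case by force
next
  case (Cons u us)
  then obtain n a p where P: "\<forall>i<n. p i \<in> set us"
    and L: "local_comb d x (coincidence d us x) n a p" by auto
  define c where "c = coincidence d us x"
  define e where "e = (1 + d x u) * (1 + c)"
  have ceq: "coincidence d (u # us) x = e + c"
    unfolding e_def c_def coincidence_def bjoin_def by (simp add: algebra_simps)
  have "e * c = 0" "e * d x u = 0" unfolding e_def by (simp_all add: bool_simps)
  from local_comb_cons[OF L[folded c_def] this]
  have "local_comb d x (e + c) (Suc n) (case_nat e a) (case_nat u p)" .
  moreover have "\<forall>i<Suc n. case_nat u p i \<in> set (u # us)"
    using P by (auto split: nat.split)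
  ultimately show ?case using ceq by metis
qed

lemma coincidence_above:
  assumes "u \<in> set us"
  shows "(1 + d x u) * coincidence d us x = 1 + d x u"
  using assms
proof (induction us)
  case Nil
  then show ?case by simp
next
  case (Cons u' us)
  define c where "c = coincidence d us x"
  define b where "b = 1 + d x u"
  define b' where "b' = 1 + d x u'"
  have ceq: "coincidence d (u' # us) x = b' + c + b' * c"
    unfolding c_def b'_def coincidence_def bjoin_def by simp
  show ?case
  proof (cases "u \<in> set us")
    case True
    then have h: "b * c = b" using Cons unfolding b_def c_def by blast
    have "b * (b' + c + b' * c) = b * b' + b * c + b' * (b * c)" by (simp add: algebra_simps)
    also have "\<dots> = b" using h by (simp add: bool_simps)
    finally show ?thesis unfolding ceq b_def[symmetric] .
  next
    case False
    then have "b' = b" using Cons unfolding b_def b'_def by auto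
    then show ?thesis unfolding ceq b_def[symmetric] by (simp add: bool_simps)
  qed
qed

end

locale orth_setting = boolean_metric_space X d
  for X :: "'a set" and d :: "'a \<Rightarrow> 'a \<Rightarrow> 'b::comm_ring_1" +
  fixes z :: 'a and U :: "'a set" and us :: "'a list"
  assumes base: "z \<in> X" and U_sub: "U \<subseteq> X" and gens_sub: "set us \<subseteq> U"
    and gens: "\<forall>y\<in>U. \<exists>n f q. (\<forall>i<n. q i \<in> set us) \<and> convex_comb d y n f q"
begin

lemma orth_compl_sub: "orth_compl X d z U \<subseteq> X"
  unfolding orth_compl_def by auto

lemma far_off_coincidence:
  assumes x: "x \<in> X" and y: "y \<in> U"
  shows "(1 + coincidence d us x) * d x y = 1 + coincidence d us x"
proof -
  define C where "C = coincidence d us x"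
  obtain n f q where q: "\<forall>i<n. q i \<in> set us" and cq: "convex_comb d y n f q"
    using gens y by blast
  have pu: "partition_unity n f" using cq unfolding convex_comb_def by blast
  show ?thesis unfolding C_def[symmetric]
  proof (rule partition_local_eq[OF pu], intro allI impI)
    fix i assume i: "i < n"
    have yX: "y \<in> X" and qX: "q i \<in> X" using y q i U_sub gens_sub by auto
    have "f i * d y (q i) = 0" using cq i unfolding convex_comb_def by blast
    then have "f i * d y x = f i * d (q i) x" using dist_local_subst[OF yX qX x] by blast
    then have near: "f i * d x y = f i * d x (q i)"
      unfolding dist_sym[OF x yX] dist_sym[OF x qX] .
    have far: "(1 + C) * d x (q i) = 1 + C"
      unfolding C_def using q i by (blast intro: complement_below_swap[OF coincidence_above])
    have "f i * ((1 + C) * d x y) = (1 + C) * (f i * d x y)" by (simp only: mult.left_commute)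
    also have "\<dots> = f i * ((1 + C) * d x (q i))" unfolding near by (simp only: mult.left_commute)
    also have "\<dots> = f i * (1 + C)" unfolding far ..
    finally show "f i * ((1 + C) * d x y) = f i * (1 + C)" .
  qed
qed

lemma glued_orth:
  assumes x: "x \<in> X" and w: "w \<in> X"
    and on_c: "coincidence d us x * d w z = 0" and off_c: "(1 + coincidence d us x) * d w x = 0"
  shows "w \<in> orth_compl X d z U"
proof -
  define C where "C = coincidence d us x"
  have "orth d z w y" if y: "y \<in> U" for y
  proof -
    have yX: "y \<in> X" using U_sub y by blast
    define E where "E = bjoin (d z w) (d z y)"
    have below: "d w y * E = d w y"
      using dist_triangle[OF w base yX] dist_sym[OF w base] unfolding E_def by simp
    have "C * d w y = C * E"
    proof -
      have "C * d w y = C * d z y" using dist_local_subst[OF w base yX] on_c C_def by blast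
      moreover have "C * d z w = C * 0" using on_c dist_sym[OF w base] C_def by simp
      then have "C * E = C * bjoin 0 (d z y)" unfolding E_def by (rule bjoin_local)
      ultimately show ?thesis unfolding bjoin_def by simp
    qed
    moreover have "(1 + C) * d w y = (1 + C) * E"
    proof -
      have one: "(1 + C) * d w y = 1 + C"
        using dist_local_subst[OF w x yX] off_c far_off_coincidence[OF x y] C_def by simp
      have "(1 + C) * E = ((1 + C) * d w y) * E" using one by simp
      also have "\<dots> = (1 + C) * (d w y * E)" by (simp only: mult.assoc)
      also have "\<dots> = 1 + C" using below one by simp
      finally show ?thesis using one by simp
    qed
    ultimately have "d w y = E" by (rule complement_local_eq)
    then show ?thesis unfolding orth_def E_def .
  qed
  then show ?thesis using w unfolding orth_compl_def by blast
qed

lemma orth_at_base_on_coincidence: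
  assumes w: "w \<in> orth_compl X d z U" and h: "h \<in> X" and gh: "g * d w h = 0"
  shows "coincidence d us h * (g * d z w) = 0"
proof -
  have wX: "w \<in> X" using w orth_compl_sub by blast
  obtain n a p where p: "\<forall>i<n. p i \<in> set us"
    and L: "local_comb d h (coincidence d us h) n a p"
    using coincidence_local_comb by blast
  have S: "(\<Sum>i<n. a i) = coincidence d us h" and Z: "\<forall>i<n. a i * d h (p i) = 0"
    using L unfolding local_comb_def by auto
  have "a i * (g * d z w) = 0" if i: "i < n" for i
  proof -
    have pX: "p i \<in> X" and pU: "p i \<in> U" using p i gens_sub U_sub by auto
    have "d w (p i) = bjoin (d z w) (d z (p i))"
      using w pU unfolding orth_compl_def orth_def by blast
    then have zw: "d z w * d w (p i) = d z w" unfolding bjoin_def by (simp add: bool_simps)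
    have "g * d w (p i) = g * d h (p i)" using dist_local_subst[OF wX h pX gh] .
    then have "a i * (g * d w (p i)) = 0" using Z i by (metis mult.left_commute mult_zero_right)
    moreover have "a i * (g * d z w) = (a i * (g * d w (p i))) * d z w"
      using zw by (metis mult.assoc mult.commute)
    ultimately show ?thesis by simp
  qed
  then show ?thesis unfolding S[symmetric] sum_distrib_right by simp
qed

lemma orth_agrees_with_glued:
  assumes w: "w \<in> orth_compl X d z U" and h: "h \<in> X" and v: "v \<in> X"
    and on_c: "coincidence d us h * d v z = 0" and off_c: "(1 + coincidence d us h) * d v h = 0"
    and gh: "g * d w h = 0"
  shows "g * d w v = 0"
proof -
  define C where "C = coincidence d us h"
  have wX: "w \<in> X" using w orth_compl_sub by blast
  have off: "(1 + C) * (g * d w v) = 0"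
  proof -
    have "g * d w v = g * d h v" using dist_local_subst[OF wX h v gh] .
    then have "(1 + C) * (g * d w v) = g * ((1 + C) * d v h)"
      using dist_sym[OF h v] by (simp add: ac_simps)
    then show ?thesis using off_c C_def by simp
  qed
  have on: "C * (g * d w v) = 0"
  proof -
    have "C * d v w = C * d z w" using dist_local_subst[OF v base wX] on_c C_def by blast
    then have "C * (g * d w v) = C * (g * d z w)"
      unfolding dist_sym[OF wX v] by (metis mult.left_commute)
    then show ?thesis using orth_at_base_on_coincidence[OF w h gh] C_def by simp
  qed
  have "g * d w v = C * (g * d w v) + (1 + C) * (g * d w v)" by (simp add: bool_simps)
  then show ?thesis using off on by simp
qed

lemma orth_compl_convex:
  assumes pu: "partition_unity n a" and pO: "\<forall>i<n. p i \<in> orth_compl X d z U"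
    and x: "x \<in> X" and cx: "convex_comb d x n a p"
  shows "x \<in> orth_compl X d z U"
proof -
  have "orth d z x y" if y: "y \<in> U" for y
    unfolding orth_def
  proof (rule partition_local_eq[OF pu], intro allI impI)
    fix i assume i: "i < n"
    have yX: "y \<in> X" using U_sub y by blast
    have pX: "p i \<in> X" and o: "orth d z (p i) y"
      using pO i orth_compl_sub y unfolding orth_compl_def by auto
    have ax: "a i * d x (p i) = 0" using cx i unfolding convex_comb_def by blast
    have "a i * d x y = a i * d (p i) y" using dist_local_subst[OF x pX yX ax] .
    also have "\<dots> = a i * bjoin (d z (p i)) (d z y)" using o unfolding orth_def by simp
    also have "\<dots> = a i * bjoin (d z x) (d z y)"
    proof (rule bjoin_local)
      have "a i * d x z = a i * d (p i) z" using dist_local_subst[OF x pX base ax] .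
      then show "a i * d z (p i) = a i * d z x" using dist_sym x pX base by simp
    qed
    finally show "a i * d x y = a i * bjoin (d z x) (d z y)" .
  qed
  then show ?thesis using x unfolding orth_compl_def by blast
qed

lemma comb_through_glued:
  assumes x: "x \<in> X" and v: "v \<in> X" and off_c: "(1 + coincidence d us x) * d v x = 0"
  shows "\<exists>n a p. (\<forall>i<n. p i \<in> insert v (set us)) \<and> convex_comb d x n a p"
proof -
  define C where "C = coincidence d us x"
  obtain n a p where p: "\<forall>i<n. p i \<in> set us" and L: "local_comb d x C n a p"
    using coincidence_local_comb C_def by blast
  have "(1 + C) * C = 0" by (simp add: bool_simps)
  moreover have "(1 + C) * d x v = 0" using off_c dist_sym[OF x v] C_def by simp
  ultimately have "local_comb d x (1 + C + C) (Suc n) (case_nat (1 + C) a) (case_nat v p)"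
    by (rule local_comb_cons[OF L])
  moreover have "1 + C + C = 1" by (simp add: bool_simps)
  ultimately have "convex_comb d x (Suc n) (case_nat (1 + C) a) (case_nat v p)"
    by (simp add: convex_comb_iff_local_comb)
  moreover have "\<forall>i<Suc n. case_nat v p i \<in> insert v (set us)"
    using p by (auto split: nat.split)
  ultimately show ?thesis by blast
qed

text \<open>By (B) and (C), the orthogonal complement is a CFG-space, generated by the glued
  points of a generating set of X.\<close>
lemma orth_compl_cfg:
  assumes cfg: "cfg_space X d"
    and glue: "\<forall>x\<in>X. g x \<in> X \<and> coincidence d us x * d (g x) z = 0
                        \<and> (1 + coincidence d us x) * d (g x) x = 0"
  shows "cfg_space (orth_compl X d z U) d"
  unfolding cfg_space_def
proof (intro conjI)
  show "boolean_metric (orth_compl X d z U) d"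
    using metric orth_compl_sub unfolding boolean_metric_def by blast
next
  have comb: "\<forall>n a p. partition_unity n a \<and> (\<forall>i<n. p i \<in> X) \<longrightarrow> (\<exists>x\<in>X. convex_comb d x n a p)"
    using cfg unfolding cfg_space_def by blast
  show "\<forall>n a p. partition_unity n a \<and> (\<forall>i<n. p i \<in> orth_compl X d z U) \<longrightarrow>
      (\<exists>x\<in>orth_compl X d z U. convex_comb d x n a p)"
  proof (intro allI impI, elim conjE)
    fix n and a :: "nat \<Rightarrow> 'b" and p assume pu: "partition_unity n a" and pO: "\<forall>i<n. p i \<in> orth_compl X d z U"
    then obtain x where "x \<in> X" "convex_comb d x n a p"
      using comb orth_compl_sub by blast
    then show "\<exists>x\<in>orth_compl X d z U. convex_comb d x n a p"
      using orth_compl_convex[OF pu pO] by blast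
  qed
next
  obtain FX where FX: "finite FX" "FX \<subseteq> X"
    "\<forall>x\<in>X. \<exists>n a p. (\<forall>i<n. p i \<in> FX) \<and> convex_comb d x n a p"
    using cfg unfolding cfg_space_def by blast
  show "\<exists>F. finite F \<and> F \<subseteq> orth_compl X d z U \<and>
      (\<forall>x\<in>orth_compl X d z U. \<exists>n a p. (\<forall>i<n. p i \<in> F) \<and> convex_comb d x n a p)"
  proof (intro exI[of _ "g ` FX"] conjI ballI)
    show "finite (g ` FX)" using FX(1) by simp
    show "g ` FX \<subseteq> orth_compl X d z U" using glued_orth glue FX(2) by blast
  next
    fix w assume w: "w \<in> orth_compl X d z U"
    then obtain n f h where h: "\<forall>i<n. h i \<in> FX" and cw: "convex_comb d w n f h"
      using FX(3) orth_compl_sub by blast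
    have "convex_comb d w n f (\<lambda>i. g (h i))"
      using cw orth_agrees_with_glued[OF w] glue h FX(2) unfolding convex_comb_def by blast
    moreover have "\<forall>i<n. g (h i) \<in> g ` FX" using h by blast
    ultimately show "\<exists>n a p. (\<forall>i<n. p i \<in> g ` FX) \<and> convex_comb d w n a p"
      by (intro exI[of _ n] exI[of _ f] exI[of _ "\<lambda>i. g (h i)"]) simp
  qed
qed

end

theorem mainTheorem9:
  fixes X U :: "'a set" and d :: "'a \<Rightarrow> 'a \<Rightarrow> 'b::comm_ring_1" and z :: 'a
  assumes "boolean_ring_type TYPE('b)"
    and "cfg_space X d"
    and "z \<in> X"
    and "U \<subseteq> X" and "z \<in> U"
    and "cfg_space U d"
  shows "cfg_space (orth_compl X d z U) d \<and>
         (\<forall>x\<in>X. \<exists>n a p. (\<forall>i<n. p i \<in> U \<union> orth_compl X d z U) \<and> convex_comb d x n a p)"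
proof -
  obtain FU where FU: "finite FU" "FU \<subseteq> U"
    "\<forall>y\<in>U. \<exists>n a p. (\<forall>i<n. p i \<in> FU) \<and> convex_comb d y n a p"
    using assms(6) unfolding cfg_space_def by blast
  obtain us where us: "set us = FU" using finite_list FU(1) by blast
  interpret orth_setting X d z U us
    using assms FU us unfolding boolean_ring_type_def cfg_space_def by unfold_locales auto
  have glue_ex: "\<forall>x\<in>X. \<exists>w. w \<in> X \<and> coincidence d us x * d w z = 0 \<and> (1 + coincidence d us x) * d w x = 0"
    using glue_exists assms(2,3) unfolding cfg_space_def by blast
  obtain g where glue: "\<forall>x\<in>X. g x \<in> X \<and> coincidence d us x * d (g x) z = 0
                                   \<and> (1 + coincidence d us x) * d (g x) x = 0"
    using bchoice[OF glue_ex] by blast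
  have "\<forall>x\<in>X. \<exists>n a p. (\<forall>i<n. p i \<in> U \<union> orth_compl X d z U) \<and> convex_comb d x n a p"
  proof
    fix x assume x: "x \<in> X"
    have "insert (g x) (set us) \<subseteq> U \<union> orth_compl X d z U"
      using glued_orth[OF x] glue x gens_sub by auto
    moreover obtain n a p where "\<forall>i<n. p i \<in> insert (g x) (set us)" "convex_comb d x n a p"
      using comb_through_glued[OF x] glue x by blast
    ultimately show "\<exists>n a p. (\<forall>i<n. p i \<in> U \<union> orth_compl X d z U) \<and> convex_comb d x n a p"
      by blast
  qed
  then show ?thesis using orth_compl_cfg[OF assms(2) glue] by blast
qed

end
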